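(* Let $\rho$ be a partial density operator on the state space of a finite set of qubits, and let $\sigma$ be a stabilizer state, i.e. a function assigning to each stabilizer variable $\mathcal{s}$ a value $\sigma(\mathcal{s}) = c\cdot s$ with $c \in \{1,-1,i,-i\}$ and $s$ a Pauli string. Let $s_{e0}, s_{e1}, s_{e2}$ be stabilizer expressions. Then: (1) If $(\rho,\sigma) \models s_{e0}$ and $(\rho,\sigma) \models s_{e1}$, then $(\rho,\sigma) \models s_{e0}s_{e1}$ and $(\rho,\sigma) \models \lambda_0 s_{e0} + \lambda_1 s_{e1}$ for all $\lambda_0,\lambda_1 \in \mathbb{C}$ with $\lambda_0 + \lambda_1 = 1$. (2) If $s_{e0}$ is nonsingular (invertible), $(\rho,\sigma) \models s_{e0}$ and $(\rho,\sigma) \models s_{e1}s_{e0}$, then $(\rho,\sigma) \models s_{e1}$. (3) If $a,b \in \mathbb{C}$ satisfy $(a s_{e0} + b s_{e1})\rho = \rho$, every $\sigma(\mathcal{s})$ commutes with both $s_{e0}$ and $s_{e1}$, and $(\rho,\sigma) \models s_{e2}$, then $(\rho,\sigma) \models a s_{e0} + b\, s_{e1}s_{e2}$.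
   Context: A Pauli string (also called a stabilizer) is a tensor product of the single-qubit operators $I,X,Y,Z$ acting on finitely many qubits (identity elsewhere). Stabilizer expressions are the operators generated from Pauli strings by complex linear combinations: $s_e ::= s \mid \lambda_0 s_{e0} + \lambda_1 s_{e1}$ with $\lambda_0,\lambda_1 \in \mathbb{C}$; products of stabilizer expressions are again regarded as such operators. For an operator $O$ of this kind, the program state $(\rho,\sigma)$ satisfies $O$, written $(\rho,\sigma) \models O$, iff $O\rho = \rho$ and $O$ commutes with $\sigma(\mathcal{s})$ for every stabilizer variable $\mathcal{s}$ in the domain of $\sigma$. *)

theory Defs
  imports "Jordan_Normal_Form.Matrix"
begin

definition kron :: "complex mat \<Rightarrow> complex mat \<Rightarrow> complex mat" where
  "kron A B = mat (dim_row A * dim_row B) (dim_col A * dim_col B)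
     (\<lambda>(i, j). A $$ (i div dim_row B, j div dim_col B) * B $$ (i mod dim_row B, j mod dim_col B))"

datatype pauli = PI | PX | PY | PZ

definition pauli_mat :: "pauli \<Rightarrow> complex mat" where
  "pauli_mat p = (case p of
      PI \<Rightarrow> mat_of_rows_list 2 [[1, 0], [0, 1]]
    | PX \<Rightarrow> mat_of_rows_list 2 [[0, 1], [1, 0]]
    | PY \<Rightarrow> mat_of_rows_list 2 [[0, - \<i>], [\<i>, 0]]
    | PZ \<Rightarrow> mat_of_rows_list 2 [[1, 0], [0, -1]])"

text \<open>Pauli string on the n qubits: tensor product of single-qubit Paulis
  (identity factors represent qubits not acted upon).\<close>
definition pauli_string :: "pauli list \<Rightarrow> complex mat" where
  "pauli_string ps = foldr (\<lambda>p M. kron (pauli_mat p) M) ps (1\<^sub>m 1)"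

definition is_pauli_string :: "nat \<Rightarrow> complex mat \<Rightarrow> bool" where
  "is_pauli_string n M \<longleftrightarrow> (\<exists>ps. length ps = n \<and> M = pauli_string ps)"

inductive_set stab_expr :: "nat \<Rightarrow> complex mat set" for n where
  base: "is_pauli_string n s \<Longrightarrow> s \<in> stab_expr n"
| lin: "s0 \<in> stab_expr n \<Longrightarrow> s1 \<in> stab_expr n \<Longrightarrow>
        (l0 \<cdot>\<^sub>m s0 + l1 \<cdot>\<^sub>m s1) \<in> stab_expr n"

definition mat_trace :: "complex mat \<Rightarrow> complex" where
  "mat_trace A = (\<Sum>i<dim_row A. A $$ (i, i))"

definition positive_op :: "nat \<Rightarrow> complex mat \<Rightarrow> bool" where
  "positive_op d A \<longleftrightarrow> A \<in> carrier_mat d d \<and>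
     (\<forall>v \<in> carrier_vec d. conjugate v \<bullet> (A *\<^sub>v v) \<in> \<real> \<and> 0 \<le> Re (conjugate v \<bullet> (A *\<^sub>v v)))"

definition partial_density_op :: "nat \<Rightarrow> complex mat \<Rightarrow> bool" where
  "partial_density_op n \<rho> \<longleftrightarrow> positive_op (2 ^ n) \<rho> \<and> Re (mat_trace \<rho>) \<le> 1"

definition stabilizer_state :: "nat \<Rightarrow> ('v \<Rightarrow> complex mat option) \<Rightarrow> bool" where
  "stabilizer_state n \<sigma> \<longleftrightarrow> (\<forall>x M. \<sigma> x = Some M \<longrightarrow>
     (\<exists>c s. c \<in> {1, -1, \<i>, -\<i>} \<and> is_pauli_string n s \<and> M = c \<cdot>\<^sub>m s))"

definition sat :: "complex mat \<Rightarrow> ('v \<Rightarrow> complex mat option) \<Rightarrow> complex mat \<Rightarrow> bool" where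
  "sat \<rho> \<sigma> Op \<longleftrightarrow> Op * \<rho> = \<rho> \<and> (\<forall>x M. \<sigma> x = Some M \<longrightarrow> Op * M = M * Op)"

end

theory Submission
  imports Defs
begin

text \<open>All operators involved are \<open>2^n \<times> 2^n\<close> matrices, and nothing beyond these dimensions is
  needed: positivity and trace of \<open>\<rho>\<close> and the Pauli form of the values of \<open>\<sigma>\<close> play no role.
  Satisfaction of \<open>O\<close> means that \<open>\<rho>\<close> is a fixed point of \<open>O\<close> and that \<open>O\<close> lies in the
  commutant of the values of \<open>\<sigma>\<close>. The commutant is a subalgebra closed under inverses,
  and the fixed-point condition is preserved by products and affine combinations. For
  (2), \<open>s\<^sub>e\<^sub>1 \<rho> = s\<^sub>e\<^sub>1 s\<^sub>e\<^sub>0 \<rho> = \<rho>\<close> and \<open>s\<^sub>e\<^sub>1 = (s\<^sub>e\<^sub>1 s\<^sub>e\<^sub>0) s\<^sub>e\<^sub>0\<^sup>-\<^sup>1\<close>; for (3),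
  \<open>s\<^sub>e\<^sub>1 s\<^sub>e\<^sub>2 \<rho> = s\<^sub>e\<^sub>1 \<rho>\<close>.\<close>

lemma kron_carrier_mat:
  "A \<in> carrier_mat a b \<Longrightarrow> B \<in> carrier_mat c d \<Longrightarrow> kron A B \<in> carrier_mat (a * c) (b * d)"
  by (simp add: kron_def)

lemma mat_of_rows_list_carrier_mat:
  "length rs = nr \<Longrightarrow> mat_of_rows_list nc rs \<in> carrier_mat nr nc"
  by (simp add: mat_of_rows_list_def)

lemma pauli_mat_carrier_mat: "pauli_mat p \<in> carrier_mat 2 2"
  by (cases p) (auto simp: pauli_mat_def intro: mat_of_rows_list_carrier_mat)

lemma pauli_string_carrier_mat:
  "pauli_string ps \<in> carrier_mat (2 ^ length ps) (2 ^ length ps)"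
  by (induction ps)
    (auto simp: pauli_string_def intro!: kron_carrier_mat[OF pauli_mat_carrier_mat, simplified])

lemma stab_expr_carrier_mat: "s \<in> stab_expr n \<Longrightarrow> s \<in> carrier_mat (2 ^ n) (2 ^ n)"
  by (induction rule: stab_expr.induct) (auto simp: is_pauli_string_def pauli_string_carrier_mat)

lemma stabilizer_state_carrier_mat:
  "stabilizer_state n \<sigma> \<Longrightarrow> \<sigma> x = Some M \<Longrightarrow> M \<in> carrier_mat (2 ^ n) (2 ^ n)"
  unfolding stabilizer_state_def is_pauli_string_def
  by (metis pauli_string_carrier_mat smult_carrier_mat)

lemma one_smult_mat [simp]: "(1 :: 'a :: semiring_1) \<cdot>\<^sub>m A = A"
  by (rule eq_matI) auto

lemma lincomb_mult_mat:
  fixes A B R :: "'a :: comm_semiring_0 mat"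
  assumes "A \<in> carrier_mat d d" "B \<in> carrier_mat d d" "R \<in> carrier_mat d d"
  shows "(a \<cdot>\<^sub>m A + b \<cdot>\<^sub>m B) * R = a \<cdot>\<^sub>m (A * R) + b \<cdot>\<^sub>m (B * R)"
  using assms by (simp add: add_mult_distrib_mat[of _ d d] mult_smult_assoc_mat)

lemma mult_lincomb_mat:
  fixes A B R :: "'a :: comm_semiring_0 mat"
  assumes "A \<in> carrier_mat d d" "B \<in> carrier_mat d d" "R \<in> carrier_mat d d"
  shows "R * (a \<cdot>\<^sub>m A + b \<cdot>\<^sub>m B) = a \<cdot>\<^sub>m (R * A) + b \<cdot>\<^sub>m (R * B)"
proof -
  have "R * (a \<cdot>\<^sub>m A + b \<cdot>\<^sub>m B) = R * (a \<cdot>\<^sub>m A) + R * (b \<cdot>\<^sub>m B)"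
    using assms by (intro mult_add_distrib_mat) auto
  with assms show ?thesis by (simp add: mult_smult_distrib)
qed

lemma commute_mult_mat:
  fixes A B M :: "'a :: semiring_0 mat"
  assumes carrier: "A \<in> carrier_mat d d" "B \<in> carrier_mat d d" "M \<in> carrier_mat d d"
    and "A * M = M * A" "B * M = M * B"
  shows "A * B * M = M * (A * B)"
proof -
  have "A * B * M = A * (M * B)" using assms by simp
  also have "\<dots> = (A * M) * B" using carrier by simp
  also have "\<dots> = M * (A * B)" using assms by simp
  finally show ?thesis .
qed

lemma commute_lincomb_mat:
  fixes A B M :: "'a :: comm_semiring_0 mat"
  assumes "A \<in> carrier_mat d d" "B \<in> carrier_mat d d" "M \<in> carrier_mat d d"
    and "A * M = M * A" "B * M = M * B"
  shows "(a \<cdot>\<^sub>m A + b \<cdot>\<^sub>m B) * M = M * (a \<cdot>\<^sub>m A + b \<cdot>\<^sub>m B)"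
  using assms by (simp add: lincomb_mult_mat mult_lincomb_mat)

lemma commute_inverse_mat:
  fixes A A' M :: "'a :: semiring_1 mat"
  assumes carrier: "A \<in> carrier_mat d d" "A' \<in> carrier_mat d d" "M \<in> carrier_mat d d"
    and inverse: "A * A' = 1\<^sub>m d" "A' * A = 1\<^sub>m d"
    and "A * M = M * A"
  shows "A' * M = M * A'"
proof -
  have "A' * M = A' * (M * (A * A'))" using assms by simp
  also have "\<dots> = A' * ((M * A) * A')" using carrier by simp
  also have "\<dots> = A' * ((A * M) * A')" using assms by simp
  also have "\<dots> = (A' * A) * (M * A')"
    using carrier by (simp add: assoc_mult_mat[of A' d d A d "M * A'" d])
  also have "\<dots> = M * A'" using assms by simp
  finally show ?thesis .
qed

lemma invertible_mat_obtain_inverse: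
  fixes A :: "'a :: semiring_1 mat"
  assumes "invertible_mat A" "A \<in> carrier_mat d d"
  obtains A' where "A' \<in> carrier_mat d d" "A * A' = 1\<^sub>m d" "A' * A = 1\<^sub>m d"
proof -
  obtain A' where "A * A' = 1\<^sub>m d" "A' * A = 1\<^sub>m (dim_row A')"
    using assms unfolding invertible_mat_def inverts_mat_def by auto
  moreover from this have "A' \<in> carrier_mat d d"
    using assms(2) by (metis carrier_matD carrier_matI index_mult_mat(2,3) index_one_mat(2,3))
  ultimately show thesis using that by auto
qed

definition commutes_with_state :: "('v \<Rightarrow> 'a :: semiring_0 mat option) \<Rightarrow> 'a mat \<Rightarrow> bool" where
  "commutes_with_state \<sigma> A \<longleftrightarrow> (\<forall>x M. \<sigma> x = Some M \<longrightarrow> A * M = M * A)"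

lemma sat_iff: "sat \<rho> \<sigma> A \<longleftrightarrow> A * \<rho> = \<rho> \<and> commutes_with_state \<sigma> A"
  by (simp add: sat_def commutes_with_state_def)

locale square_sat =
  fixes d :: nat and \<rho> :: "complex mat" and \<sigma> :: "'v \<Rightarrow> complex mat option"
  assumes density_carrier: "\<rho> \<in> carrier_mat d d"
    and state_carrier: "\<sigma> x = Some M \<Longrightarrow> M \<in> carrier_mat d d"
begin

lemma commutes_with_state_mult:
  assumes "A \<in> carrier_mat d d" "B \<in> carrier_mat d d"
    and "commutes_with_state \<sigma> A" "commutes_with_state \<sigma> B"
  shows "commutes_with_state \<sigma> (A * B)"
  using assms state_carrier commute_mult_mat unfolding commutes_with_state_def by blast

lemma commutes_with_state_lincomb:
  assumes "A \<in> carrier_mat d d" "B \<in> carrier_mat d d"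
    and "commutes_with_state \<sigma> A" "commutes_with_state \<sigma> B"
  shows "commutes_with_state \<sigma> (a \<cdot>\<^sub>m A + b \<cdot>\<^sub>m B)"
  using assms state_carrier commute_lincomb_mat unfolding commutes_with_state_def by blast

lemma commutes_with_state_cancel_right:
  assumes carrier: "A \<in> carrier_mat d d" "B \<in> carrier_mat d d" and "invertible_mat A"
    and "commutes_with_state \<sigma> A" "commutes_with_state \<sigma> (B * A)"
  shows "commutes_with_state \<sigma> B"
proof -
  obtain A' where A': "A' \<in> carrier_mat d d" "A * A' = 1\<^sub>m d" "A' * A = 1\<^sub>m d"
    using assms invertible_mat_obtain_inverse by blast
  have "commutes_with_state \<sigma> A'"
    using assms A' state_carrier commute_inverse_mat unfolding commutes_with_state_def by blast
  with assms A' have "commutes_with_state \<sigma> (B * A * A')"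
    by (intro commutes_with_state_mult[of "B * A" A']) auto
  moreover have "B * A * A' = B" using carrier A' by simp
  ultimately show ?thesis by simp
qed

lemma sat_mult:
  assumes "A \<in> carrier_mat d d" "B \<in> carrier_mat d d" "sat \<rho> \<sigma> A" "sat \<rho> \<sigma> B"
  shows "sat \<rho> \<sigma> (A * B)"
  using assms density_carrier commutes_with_state_mult by (simp add: sat_iff)

lemma sat_lincomb:
  assumes "A \<in> carrier_mat d d" "B \<in> carrier_mat d d" "(a \<cdot>\<^sub>m A + b \<cdot>\<^sub>m B) * \<rho> = \<rho>"
    and "commutes_with_state \<sigma> A" "commutes_with_state \<sigma> B"
  shows "sat \<rho> \<sigma> (a \<cdot>\<^sub>m A + b \<cdot>\<^sub>m B)"
  using assms commutes_with_state_lincomb by (simp add: sat_iff)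

lemma sat_affine_comb:
  assumes "A \<in> carrier_mat d d" "B \<in> carrier_mat d d" "sat \<rho> \<sigma> A" "sat \<rho> \<sigma> B"
    and "l0 + l1 = 1"
  shows "sat \<rho> \<sigma> (l0 \<cdot>\<^sub>m A + l1 \<cdot>\<^sub>m B)"
proof (rule sat_lincomb)
  have "(l0 \<cdot>\<^sub>m A + l1 \<cdot>\<^sub>m B) * \<rho> = (l0 + l1) \<cdot>\<^sub>m \<rho>"
    using assms(1-4) density_carrier
    by (simp add: lincomb_mult_mat sat_iff add_smult_distrib_right_mat)
  then show "(l0 \<cdot>\<^sub>m A + l1 \<cdot>\<^sub>m B) * \<rho> = \<rho>"
    using \<open>l0 + l1 = 1\<close> by simp
qed (use assms in \<open>simp_all add: sat_iff\<close>)

lemma sat_cancel_right: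
  assumes "A \<in> carrier_mat d d" "B \<in> carrier_mat d d" "invertible_mat A"
    and "sat \<rho> \<sigma> A" "sat \<rho> \<sigma> (B * A)"
  shows "sat \<rho> \<sigma> B"
proof -
  have "B * \<rho> = B * A * \<rho>" using assms density_carrier by (simp add: sat_iff)
  then have "B * \<rho> = \<rho>" using assms by (simp add: sat_iff)
  then show ?thesis using assms commutes_with_state_cancel_right by (simp add: sat_iff)
qed

lemma sat_lincomb_mult:
  assumes "A \<in> carrier_mat d d" "B \<in> carrier_mat d d" "C \<in> carrier_mat d d"
    and "(a \<cdot>\<^sub>m A + b \<cdot>\<^sub>m B) * \<rho> = \<rho>"
    and "commutes_with_state \<sigma> A" "commutes_with_state \<sigma> B" "sat \<rho> \<sigma> C"
  shows "sat \<rho> \<sigma> (a \<cdot>\<^sub>m A + b \<cdot>\<^sub>m (B * C))"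
proof (rule sat_lincomb)
  have "B * C * \<rho> = B * \<rho>" using assms density_carrier by (simp add: sat_iff)
  then show "(a \<cdot>\<^sub>m A + b \<cdot>\<^sub>m (B * C)) * \<rho> = \<rho>"
    using assms density_carrier by (simp add: lincomb_mult_mat)
  show "commutes_with_state \<sigma> (B * C)"
    by (rule commutes_with_state_mult) (use assms in \<open>simp_all add: sat_iff\<close>)
qed (use assms in simp_all)

end

theorem lemma2:
  fixes n :: nat and \<rho> :: "complex mat" and \<sigma> :: "'v \<Rightarrow> complex mat option"
    and se0 se1 se2 :: "complex mat"
  assumes "partial_density_op n \<rho>"
    and "stabilizer_state n \<sigma>"
    and "se0 \<in> stab_expr n" and "se1 \<in> stab_expr n" and "se2 \<in> stab_expr n"
  shows "(sat \<rho> \<sigma> se0 \<and> sat \<rho> \<sigma> se1 \<longrightarrow>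
            sat \<rho> \<sigma> (se0 * se1) \<and>
            (\<forall>l0 l1 :: complex. l0 + l1 = 1 \<longrightarrow> sat \<rho> \<sigma> (l0 \<cdot>\<^sub>m se0 + l1 \<cdot>\<^sub>m se1)))
    \<and> (invertible_mat se0 \<and> sat \<rho> \<sigma> se0 \<and> sat \<rho> \<sigma> (se1 * se0) \<longrightarrow> sat \<rho> \<sigma> se1)
    \<and> (\<forall>a b :: complex.
          (a \<cdot>\<^sub>m se0 + b \<cdot>\<^sub>m se1) * \<rho> = \<rho>
          \<and> (\<forall>x M. \<sigma> x = Some M \<longrightarrow> se0 * M = M * se0 \<and> se1 * M = M * se1)
          \<and> sat \<rho> \<sigma> se2
          \<longrightarrow> sat \<rho> \<sigma> (a \<cdot>\<^sub>m se0 + b \<cdot>\<^sub>m (se1 * se2)))"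
proof -
  interpret square_sat "2 ^ n" \<rho> \<sigma>
    using assms(1,2) stabilizer_state_carrier_mat
    by unfold_locales (auto simp: partial_density_op_def positive_op_def)
  have carrier: "se0 \<in> carrier_mat (2 ^ n) (2 ^ n)" "se1 \<in> carrier_mat (2 ^ n) (2 ^ n)"
    "se2 \<in> carrier_mat (2 ^ n) (2 ^ n)"
    using assms(3-5) stab_expr_carrier_mat by auto
  show ?thesis
  proof (intro conjI impI allI)
    show "sat \<rho> \<sigma> (se0 * se1)" if "sat \<rho> \<sigma> se0 \<and> sat \<rho> \<sigma> se1"
      using that carrier sat_mult by blast
    show "sat \<rho> \<sigma> (l0 \<cdot>\<^sub>m se0 + l1 \<cdot>\<^sub>m se1)"
      if "sat \<rho> \<sigma> se0 \<and> sat \<rho> \<sigma> se1" "l0 + l1 = 1" for l0 l1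
      using that carrier sat_affine_comb by blast
    show "sat \<rho> \<sigma> se1"
      if "invertible_mat se0 \<and> sat \<rho> \<sigma> se0 \<and> sat \<rho> \<sigma> (se1 * se0)"
      using that carrier sat_cancel_right by blast
    show "sat \<rho> \<sigma> (a \<cdot>\<^sub>m se0 + b \<cdot>\<^sub>m (se1 * se2))"
      if "(a \<cdot>\<^sub>m se0 + b \<cdot>\<^sub>m se1) * \<rho> = \<rho>
          \<and> (\<forall>x M. \<sigma> x = Some M \<longrightarrow> se0 * M = M * se0 \<and> se1 * M = M * se1)
          \<and> sat \<rho> \<sigma> se2" for a b
      using that carrier sat_lincomb_mult unfolding commutes_with_state_def by blast
  qed
qed

end
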